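(* Let $N\ge1$, $f:\mathbb{N}^N\to\mathbb{N}$, $p$ a prime and $n\ge1$. Let $U=\{\mathbf{x}\in\mathbb{N}^N:\mathbf{x}\ne\mathbf{0},\ x_i\in\{0,1\}\ \forall i\}$ and $h(\mathbf{s})=f(\mathbf{s})^p$ for $\mathbf{s}\in U$, $h(\mathbf{s})=0$ otherwise. Then $$\binom{pn}{p\mathbf{1}}_f\equiv\sum_{k=1}^{n}\ \sum_{\{\mathbf{b}_1,\dots,\mathbf{b}_k\}}\frac{(pn)!}{(p!)^k\,(p(n-k))!}\,f(\mathbf{0})^{p(n-k)}\,h(\mathbf{b}_1)\cdots h(\mathbf{b}_k)\pmod{pn},$$ where the inner sum runs over all vector partitions $\{\mathbf{b}_1,\dots,\mathbf{b}_k\}$ of $\mathbf{1}=(1,\dots,1)\in\mathbb{N}^N$ into $k$ non-zero parts (terms with $k>N$ are absent).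
   Context: $\mathbb{N}=\{0,1,2,\dots\}$. A vector partition of $\mathbf{1}$ into $k$ non-zero parts is a multiset of $k$ non-zero vectors in $\mathbb{N}^N$ summing to $\mathbf{1}$. For $k\ge0$ and $\mathbf{x}\in\mathbb{N}^N$, $\binom{k}{\mathbf{x}}_f=\sum_{\mathbf{m}_1+\cdots+\mathbf{m}_k=\mathbf{x}} f(\mathbf{m}_1)\cdots f(\mathbf{m}_k)$ over tuples of vectors in $\mathbb{N}^N$. Convention $0^0=1$. *)

theory Defs
  imports Main "HOL-Library.Multiset" "HOL-Library.FuncSet" "HOL-Number_Theory.Cong"
begin

text \<open>Vectors in N^N are represented as functions nat => nat vanishing at indices >= N.\<close>

definition vecs :: "nat \<Rightarrow> (nat \<Rightarrow> nat) set" where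
  "vecs N = {v. \<forall>i\<ge>N. v i = 0}"

definition zero_vec :: "nat \<Rightarrow> nat" where
  "zero_vec = (\<lambda>_. 0)"

definition const_vec :: "nat \<Rightarrow> nat \<Rightarrow> (nat \<Rightarrow> nat)" where
  "const_vec N c = (\<lambda>i. if i < N then c else 0)"

definition fbinom :: "nat \<Rightarrow> ((nat \<Rightarrow> nat) \<Rightarrow> nat) \<Rightarrow> nat \<Rightarrow> (nat \<Rightarrow> nat) \<Rightarrow> nat" where
  "fbinom N f k x =
     (\<Sum>m \<in> {m \<in> {..<k} \<rightarrow>\<^sub>E vecs N. (\<lambda>i. \<Sum>j<k. m j i) = x}. \<Prod>j<k. f (m j))"

definition vec_partitions :: "nat \<Rightarrow> nat \<Rightarrow> (nat \<Rightarrow> nat) multiset set" where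
  "vec_partitions N k =
     {B. size B = k \<and> (\<forall>b\<in>#B. b \<in> vecs N \<and> b \<noteq> zero_vec)
         \<and> (\<lambda>i. \<Sum>b\<in>#B. b i) = const_vec N 1}"

definition Uset :: "nat \<Rightarrow> (nat \<Rightarrow> nat) set" where
  "Uset N = {x \<in> vecs N. x \<noteq> zero_vec \<and> (\<forall>i<N. x i \<in> {0, 1})}"

definition hfun :: "nat \<Rightarrow> ((nat \<Rightarrow> nat) \<Rightarrow> nat) \<Rightarrow> nat \<Rightarrow> (nat \<Rightarrow> nat) \<Rightarrow> nat" where
  "hfun N f p s = (if s \<in> Uset N then f s ^ p else 0)"

end

(*
  Group the (pn)-tuples counted by fbinom by their multiset A of entries; A contributes
  (number of orderings of A) * prod f.  Removing one copy of v from A shows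
  count A v * M = |A| * M' for the number M of orderings, so |A| = pn divides
  gcd(multiplicities) * M.  That gcd divides the sum of first coordinates, p, so it is 1
  unless p divides every multiplicity, and then A vanishes mod pn.  If p divides every
  multiplicity, each nonzero vector occurs exactly p times, i.e. A consists of p copies of a
  vector partition B of 1 into k parts padded with p(n-k) zero vectors, and its contribution
  is exactly the (k, B) term of the right-hand side.
*)

theory Submission
  imports Defs "HOL-Combinatorics.Multiset_Permutations"
begin

lemma sum_mset_eq_sum_count:
  "(\<Sum>x\<in>#A. g x) = (\<Sum>x\<in>set_mset A. of_nat (count A x) * (g x :: 'b::comm_semiring_1))"
proof (induction A)
  case (add a A)
  have "(\<Sum>x\<in>set_mset (add_mset a A). of_nat (count (add_mset a A) x) * g x)
      = (\<Sum>x\<in>insert a (set_mset A). of_nat (count A x) * g x + (if x = a then g x else 0))"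
    by (intro sum.cong) (auto simp: algebra_simps)
  also have "\<dots> = g a + (\<Sum>x\<in>set_mset A. of_nat (count A x) * g x)"
    by (cases "a \<in># A") (simp_all add: sum.distrib insert_absorb not_in_iff add.commute)
  finally show ?case using add.IH by simp
qed simp

lemma count_mult_le_sum_mset:
  fixes g :: "'a \<Rightarrow> nat"
  shows "count A v * g v \<le> (\<Sum>x\<in>#A. g x)"
proof (cases "v \<in># A")
  case True
  then have "count A v * g v \<le> (\<Sum>x\<in>set_mset A. count A x * g x)"
    by (intro member_le_sum[where f = "\<lambda>x. count A x * g x"]) auto
  then show ?thesis by (simp add: sum_mset_eq_sum_count)
qed (simp add: not_in_iff)

lemma sum_mset_repeat_mset:
  "(\<Sum>x\<in>#repeat_mset k A. g x) = of_nat k * (\<Sum>x\<in>#A. g x :: 'b::comm_semiring_1)"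
  by (induction k) (simp_all add: algebra_simps)

lemma prod_mset_repeat_mset:
  "(\<Prod>x\<in>#repeat_mset k A. g x) = (\<Prod>x\<in>#A. g x :: 'b::comm_monoid_mult) ^ k"
  by (induction k) (simp_all add: mult.commute)

lemma prod_mset_power: "(\<Prod>x\<in>#A. g x ^ k) = (\<Prod>x\<in>#A. g x :: 'b::comm_monoid_mult) ^ k"
  by (induction A) (simp_all add: power_mult_distrib)

lemma sum_prod_list_by_mset:
  assumes "finite M"
  shows "(\<Sum>xs | mset xs \<in> M. prod_list (map f xs)) =
         (\<Sum>A\<in>M. of_nat (card (permutations_of_multiset A)) * (\<Prod>x\<in>#A. f x :: 'b::comm_semiring_1))"
proof -
  have "{xs. mset xs \<in> M} = (\<Union>A\<in>M. permutations_of_multiset A)"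
    by (auto simp: permutations_of_multiset_def)
  then have "(\<Sum>xs | mset xs \<in> M. prod_list (map f xs))
      = (\<Sum>xs\<in>(\<Union>A\<in>M. permutations_of_multiset A). prod_list (map f xs))"
    by (simp only:)
  also have "\<dots> = (\<Sum>A\<in>M. \<Sum>xs\<in>permutations_of_multiset A. prod_list (map f xs))"
    by (rule sum.UNION_disjoint[OF assms]) (simp_all, auto simp: permutations_of_multiset_def)
  also have "\<dots> = (\<Sum>A\<in>M. \<Sum>xs\<in>permutations_of_multiset A. \<Prod>x\<in>#A. f x)"
    by (intro sum.cong refl)
      (auto simp: permutations_of_multiset_def prod_mset_prod_list[symmetric] simp flip: mset_map)
  finally show ?thesis by simp
qed

lemma size_dvd_Gcd_count_mult_card_permutations:
  "size A dvd Gcd (count A ` set_mset A) * card (permutations_of_multiset A)"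
proof -
  let ?M = "card (permutations_of_multiset A)"
  have "size A dvd Gcd ((*) ?M ` count A ` set_mset A)"
  proof (rule Gcd_greatest)
    fix c assume "c \<in> (*) ?M ` count A ` set_mset A"
    then obtain x where "x \<in># A" "c = ?M * count A x" by auto
    then show "size A dvd c"
      using card_permutations_of_multiset_remove_aux[of x A] by simp
  qed
  then show ?thesis unfolding Gcd_mult by (simp add: mult.commute)
qed

definition vec_msets :: "nat \<Rightarrow> nat \<Rightarrow> (nat \<Rightarrow> nat) \<Rightarrow> (nat \<Rightarrow> nat) multiset set" where
  "vec_msets N K x = {A. size A = K \<and> set_mset A \<subseteq> vecs N \<and> (\<lambda>i. \<Sum>b\<in>#A. b i) = x}"

lemma sum_mset_coord_vec_msets: "A \<in> vec_msets N K x \<Longrightarrow> (\<Sum>b\<in>#A. b i) = x i"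
  by (auto simp: vec_msets_def)

lemma vec_partitions_subset_vec_msets: "vec_partitions N k \<subseteq> vec_msets N k (const_vec N 1)"
  by (auto simp: vec_partitions_def vec_msets_def)

lemma finite_vec_msets: "finite (vec_msets N K x)"
proof -
  define c where "c = (\<Sum>i<N. x i)"
  define V where "V = {v. \<forall>i. (i \<in> {..<N} \<longrightarrow> v i \<in> {..c}) \<and> (i \<notin> {..<N} \<longrightarrow> v i = 0)}"
  have "vec_msets N K x \<subseteq> mset ` {xs. set xs \<subseteq> V \<and> length xs = K}"
  proof
    fix A assume A: "A \<in> vec_msets N K x"
    obtain xs where xs: "mset xs = A" using ex_mset by blast
    have "set xs \<subseteq> V"
    proof
      fix v assume "v \<in> set xs"
      then have v: "v \<in># A" "v \<in> vecs N" using A xs by (auto simp: vec_msets_def)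
      have "v i \<le> c" if "i < N" for i
      proof -
        have "v i \<le> count A v * v i" using v(1) by simp
        also have "\<dots> \<le> x i"
          using count_mult_le_sum_mset[of A v "\<lambda>b. b i"] sum_mset_coord_vec_msets[OF A] by simp
        also have "\<dots> \<le> c" using that by (auto simp: c_def intro: member_le_sum)
        finally show ?thesis .
      qed
      then show "v \<in> V" using v(2) by (auto simp: V_def vecs_def)
    qed
    then show "A \<in> mset ` {xs. set xs \<subseteq> V \<and> length xs = K}"
      using A xs by (auto simp: vec_msets_def)
  qed
  moreover have "finite V" unfolding V_def by (intro finite_set_of_finite_funs) auto
  ultimately show ?thesis
    by (rule finite_subset[OF _ finite_imageI[OF finite_lists_length_eq]])
qed

lemma sum_mset_coord_map_upt: "(\<Sum>b\<in>#mset (map m [0..<K]). b i) = (\<Sum>j<K. m j i)"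
  by (simp add: sum_unfold_sum_mset multiset.map_comp comp_def atLeast0LessThan)

lemma fbinom_eq_sum_lists:
  "fbinom N f K x = (\<Sum>xs | mset xs \<in> vec_msets N K x. prod_list (map f xs))"
  unfolding fbinom_def
proof (rule sum.reindex_bij_witness[where j = "\<lambda>m. map m [0..<K]"
      and i = "\<lambda>xs k. if k < K then xs ! k else undefined"])
  fix m assume "m \<in> {m \<in> {..<K} \<rightarrow>\<^sub>E vecs N. (\<lambda>i. \<Sum>j<K. m j i) = x}"
  then have m: "m \<in> {..<K} \<rightarrow>\<^sub>E vecs N" "(\<lambda>i. \<Sum>j<K. m j i) = x" by auto
  show "(\<lambda>k. if k < K then map m [0..<K] ! k else undefined) = m"
    by (rule ext) (simp add: PiE_arb[OF m(1)])
  show "map m [0..<K] \<in> {xs. mset xs \<in> vec_msets N K x}"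
    using m(2) PiE_mem[OF m(1)] unfolding vec_msets_def
    by (simp add: sum_mset_coord_map_upt image_subset_iff atLeast0LessThan del: mset_map)
  show "prod_list (map f (map m [0..<K])) = (\<Prod>j<K. f (m j))"
    by (simp add: prod.distinct_set_conv_list[symmetric] atLeast0LessThan)
next
  fix xs assume "xs \<in> {xs. mset xs \<in> vec_msets N K x}"
  then have xs: "length xs = K" "set xs \<subseteq> vecs N" "(\<lambda>i. \<Sum>b\<in>#mset xs. b i) = x"
    by (auto simp: vec_msets_def)
  let ?m = "\<lambda>k. if k < K then xs ! k else undefined"
  have map_eq: "map ?m [0..<K] = xs"
    using xs(1) by (intro nth_equalityI) auto
  then show "map ?m [0..<K] = xs" .
  have "?m \<in> {..<K} \<rightarrow>\<^sub>E vecs N"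
    using xs(1,2) nth_mem by (intro PiE_I) fastforce+
  moreover have "(\<lambda>i. \<Sum>j<K. ?m j i) = x"
    using xs(3) sum_mset_coord_map_upt[where m = ?m and K = K] unfolding map_eq by simp
  ultimately show "?m \<in> {m \<in> {..<K} \<rightarrow>\<^sub>E vecs N. (\<lambda>i. \<Sum>j<K. m j i) = x}"
    by blast
qed

lemma fbinom_eq_sum_vec_msets:
  "fbinom N f K x = (\<Sum>A\<in>vec_msets N K x. card (permutations_of_multiset A) * (\<Prod>v\<in>#A. f v))"
  using sum_prod_list_by_mset[OF finite_vec_msets, of f N K x] by (simp add: fbinom_eq_sum_lists)

lemma exists_nonzero_coord:
  assumes "v \<in> vecs N" "v \<noteq> zero_vec"
  obtains i where "i < N" "v i \<noteq> 0"
proof -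
  obtain i where "v i \<noteq> 0" using assms(2) by (auto simp: zero_vec_def fun_eq_iff)
  moreover have "i < N"
  proof (rule ccontr)
    assume "\<not> i < N"
    then have "v i = 0" using assms(1) by (simp add: vecs_def)
    with calculation show False by simp
  qed
  ultimately show thesis using that by blast
qed

lemma count_mult_coord_le_const:
  assumes "(\<lambda>i. \<Sum>b\<in>#A. b i) = const_vec N c" "j < N"
  shows "count A v * v j \<le> c"
  using count_mult_le_sum_mset[of A v "\<lambda>b. b j"] fun_cong[OF assms(1), of j] assms(2)
  by (simp add: const_vec_def)

lemma count_le_const_if_nonzero:
  assumes sum: "(\<lambda>i. \<Sum>b\<in>#A. b i) = const_vec N c" and v: "v \<in> vecs N" "v \<noteq> zero_vec"
  shows "count A v \<le> c"
proof -
  obtain i where i: "i < N" "v i \<noteq> 0" using exists_nonzero_coord[OF v] .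
  then have "count A v \<le> count A v * v i" by simp
  also have "\<dots> \<le> c" using count_mult_coord_le_const[OF sum i(1)] .
  finally show ?thesis .
qed

lemma count_vec_partition:
  assumes "B \<in> vec_partitions N k" "b \<in># B"
  shows "count B b = 1"
proof -
  have "count B b \<le> 1"
    using count_le_const_if_nonzero[of B N 1 b] assms by (simp add: vec_partitions_def)
  then show ?thesis using assms(2) by (auto simp: le_Suc_eq count_eq_zero_iff)
qed

lemma mset_set_set_mset_vec_partition:
  assumes "B \<in> vec_partitions N k"
  shows "mset_set (set_mset B) = B"
proof (rule multiset_eqI)
  fix b show "count (mset_set (set_mset B)) b = count B b"
    using count_vec_partition[OF assms, of b] by (cases "b \<in># B") (simp_all add: not_in_iff)
qed

lemma vec_partition_part_in_Uset:
  assumes B: "B \<in> vec_partitions N k" and b: "b \<in># B"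
  shows "b \<in> Uset N"
proof -
  have "b j \<le> 1" if "j < N" for j
    using count_mult_coord_le_const[of B N 1 j b] count_vec_partition[OF B b] B that
    by (simp add: vec_partitions_def)
  moreover have "b \<in> vecs N" "b \<noteq> zero_vec" using B b by (simp_all add: vec_partitions_def)
  ultimately show ?thesis by (auto simp: Uset_def le_Suc_eq)
qed

lemma dvd_card_permutations_if_not_all_counts_dvd:
  assumes p: "prime p" and N: "N \<ge> 1" and A: "A \<in> vec_msets N K (const_vec N p)"
    and not_dvd: "\<not> (\<forall>v. p dvd count A v)"
  shows "K dvd card (permutations_of_multiset A)"
proof -
  let ?G = "Gcd (count A ` set_mset A)"
  have "?G dvd (\<Sum>v\<in>set_mset A. count A v * v 0)"
    by (intro dvd_sum dvd_mult2 Gcd_dvd imageI)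
  also have "(\<Sum>v\<in>set_mset A. count A v * v 0) = p"
    using sum_mset_eq_sum_count[of "\<lambda>v. v 0" A] sum_mset_coord_vec_msets[OF A, of 0] N
    by (simp add: const_vec_def)
  finally have "?G dvd p" .
  moreover have "?G \<noteq> p"
  proof
    assume "?G = p"
    moreover have "?G dvd count A v" for v
      by (cases "v \<in># A") (simp_all add: Gcd_dvd not_in_iff)
    ultimately have "p dvd count A v" for v by simp
    with not_dvd show False by blast
  qed
  ultimately have "?G = 1" using p unfolding prime_nat_iff by blast
  then show ?thesis
    using size_dvd_Gcd_count_mult_card_permutations[of A] A by (simp add: vec_msets_def)
qed

lemma count_eq_if_all_counts_dvd:
  assumes A: "A \<in> vec_msets N K (const_vec N p)" and dvd: "\<forall>v. p dvd count A v"
    and v: "v \<in># A" "v \<noteq> zero_vec"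
  shows "count A v = p"
proof (rule antisym)
  show "count A v \<le> p"
    using count_le_const_if_nonzero[of A N p v] A v by (auto simp: vec_msets_def)
  show "p \<le> count A v"
    using dvd v(1) by (simp add: dvd_imp_le)
qed

definition pad_repeat :: "nat \<Rightarrow> nat \<Rightarrow> nat \<Rightarrow> (nat \<Rightarrow> nat) multiset \<Rightarrow> (nat \<Rightarrow> nat) multiset" where
  "pad_repeat p n k B = repeat_mset p B + replicate_mset (p * (n - k)) zero_vec"

definition nonzero_parts :: "(nat \<Rightarrow> nat) multiset \<Rightarrow> (nat \<Rightarrow> nat) multiset" where
  "nonzero_parts A = mset_set (set_mset A - {zero_vec})"

lemma count_pad_repeat:
  "count (pad_repeat p n k B) v = p * count B v + (if v = zero_vec then p * (n - k) else 0)"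
  by (simp add: pad_repeat_def)

lemma set_mset_pad_repeat_subset: "set_mset (pad_repeat p n k B) \<subseteq> insert zero_vec (set_mset B)"
  by (auto simp: count_pad_repeat split: if_splits simp flip: count_greater_zero_iff)

lemma set_mset_pad_repeat_minus_zero:
  assumes "p > 0"
  shows "set_mset (pad_repeat p n k B) - {zero_vec} = set_mset B - {zero_vec}"
  using assms by (auto simp: count_pad_repeat simp flip: count_greater_zero_iff)

lemma pad_repeat_in_vec_msets:
  assumes "k \<le> n" and B: "B \<in> vec_partitions N k"
  shows "pad_repeat p n k B \<in> vec_msets N (p * n) (const_vec N p)"
proof -
  have "size (pad_repeat p n k B) = p * n"
    using assms by (simp add: pad_repeat_def vec_partitions_def flip: add_mult_distrib2)
  moreover have "set_mset (pad_repeat p n k B) \<subseteq> vecs N"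
    using set_mset_pad_repeat_subset[of p n k B] B
    by (auto simp: vec_partitions_def vecs_def zero_vec_def)
  moreover have "(\<Sum>b\<in>#pad_repeat p n k B. b i) = const_vec N p i" for i
    using sum_mset_coord_vec_msets[OF subsetD[OF vec_partitions_subset_vec_msets B], of i]
    by (simp add: pad_repeat_def sum_mset_repeat_mset const_vec_def zero_vec_def)
  ultimately show ?thesis by (simp add: vec_msets_def)
qed

lemma nonzero_parts_pad_repeat:
  assumes "p > 0" and B: "B \<in> vec_partitions N k"
  shows "nonzero_parts (pad_repeat p n k B) = B"
proof -
  have "zero_vec \<notin># B" using B by (auto simp: vec_partitions_def)
  then show ?thesis
    using set_mset_pad_repeat_minus_zero[OF assms(1), of n k B] mset_set_set_mset_vec_partition[OF B]
    by (simp add: nonzero_parts_def)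
qed

lemma repeat_nonzero_parts_decomp:
  assumes A: "A \<in> vec_msets N K (const_vec N p)" and dvd: "\<forall>v. p dvd count A v"
  shows "A = repeat_mset p (nonzero_parts A) + replicate_mset (count A zero_vec) zero_vec"
proof (rule multiset_eqI)
  fix v
  show "count A v
      = count (repeat_mset p (nonzero_parts A) + replicate_mset (count A zero_vec) zero_vec) v"
  proof (cases "v \<in># A \<and> v \<noteq> zero_vec")
    case True
    then show ?thesis using count_eq_if_all_counts_dvd[OF A dvd] by (simp add: nonzero_parts_def)
  next
    case False
    then show ?thesis by (auto simp: nonzero_parts_def not_in_iff)
  qed
qed

lemma nonzero_parts_in_vec_partitions:
  assumes "p > 0" "N \<ge> 1" and A: "A \<in> vec_msets N (p * n) (const_vec N p)"
    and dvd: "\<forall>v. p dvd count A v"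
  shows "size (nonzero_parts A) \<in> {1..n}" "nonzero_parts A \<in> vec_partitions N (size (nonzero_parts A))"
    and "pad_repeat p n (size (nonzero_parts A)) (nonzero_parts A) = A"
proof -
  let ?B = "nonzero_parts A"
  note decomp = repeat_nonzero_parts_decomp[OF A dvd]
  have size_A: "p * n = p * size ?B + count A zero_vec"
    using arg_cong[OF decomp, of size] A by (simp add: vec_msets_def)
  then have "p * size ?B \<le> p * n" by linarith
  then have size_le: "size ?B \<le> n" using \<open>p > 0\<close> by simp
  have zero_count: "count A zero_vec = p * (n - size ?B)"
    using size_A by (simp add: diff_mult_distrib2)
  show "pad_repeat p n (size ?B) ?B = A"
    using decomp zero_count by (simp add: pad_repeat_def)
  have sum_B: "(\<Sum>b\<in>#?B. b i) = const_vec N 1 i" for i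
  proof -
    have "p * (\<Sum>b\<in>#?B. b i) = (\<Sum>b\<in>#A. b i)"
      by (subst (2) decomp) (simp add: sum_mset_repeat_mset zero_vec_def)
    also have "\<dots> = p * const_vec N 1 i"
      using sum_mset_coord_vec_msets[OF A] by (simp add: const_vec_def)
    finally show ?thesis using \<open>p > 0\<close> by simp
  qed
  have "?B \<noteq> {#}"
    using sum_B[of 0] \<open>N \<ge> 1\<close> by (auto simp: const_vec_def)
  then show "size ?B \<in> {1..n}" using size_le by (simp add: Suc_le_eq nonempty_has_size)
  have "set_mset ?B \<subseteq> vecs N - {zero_vec}"
    using A by (auto simp: nonzero_parts_def vec_msets_def)
  then show "?B \<in> vec_partitions N (size ?B)"
    using sum_B by (auto simp: vec_partitions_def)
qed

lemma bij_betw_pad_repeat: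
  assumes "p > 0" "N \<ge> 1"
  shows "bij_betw (\<lambda>(k, B). pad_repeat p n k B) (SIGMA k:{1..n}. vec_partitions N k)
           {A \<in> vec_msets N (p * n) (const_vec N p). \<forall>v. p dvd count A v}"
proof (rule bij_betw_byWitness[where f' = "\<lambda>A. (size (nonzero_parts A), nonzero_parts A)"])
  show "\<forall>a\<in>SIGMA k:{1..n}. vec_partitions N k.
          (size (nonzero_parts (case a of (k, B) \<Rightarrow> pad_repeat p n k B)),
           nonzero_parts (case a of (k, B) \<Rightarrow> pad_repeat p n k B)) = a"
    by (clarsimp simp: nonzero_parts_pad_repeat[OF assms(1)]) (simp add: vec_partitions_def)
  show "(\<lambda>(k, B). pad_repeat p n k B) ` (SIGMA k:{1..n}. vec_partitions N k)
          \<subseteq> {A \<in> vec_msets N (p * n) (const_vec N p). \<forall>v. p dvd count A v}"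
    using pad_repeat_in_vec_msets by (auto simp: count_pad_repeat)
qed (use nonzero_parts_in_vec_partitions[OF assms] in auto)

lemma card_permutations_pad_repeat:
  assumes "k \<le> n" and B: "B \<in> vec_partitions N k"
  shows "card (permutations_of_multiset (pad_repeat p n k B))
         = fact (p * n) div (fact p ^ k * fact (p * (n - k)))"
proof -
  let ?A = "pad_repeat p n k B"
  have zero: "zero_vec \<notin># B" using B by (auto simp: vec_partitions_def)
  have card_B: "card (set_mset B) = k"
    using arg_cong[OF mset_set_set_mset_vec_partition[OF B], of size] B
    by (simp add: vec_partitions_def)
  have "(\<Prod>v\<in>set_mset ?A. fact (count ?A v))
      = (\<Prod>v\<in>insert zero_vec (set_mset B). fact (count ?A v) :: nat)"
    by (rule prod.mono_neutral_left) (simp_all add: set_mset_pad_repeat_subset not_in_iff)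
  also have "\<dots> = fact (count ?A zero_vec) * (\<Prod>b\<in>set_mset B. fact (count ?A b))"
    using zero by simp
  also have "(\<Prod>b\<in>set_mset B. fact (count ?A b)) = (\<Prod>b\<in>set_mset B. fact p :: nat)"
    using zero count_vec_partition[OF B] by (intro prod.cong) (auto simp: count_pad_repeat)
  finally have "(\<Prod>v\<in>set_mset ?A. fact (count ?A v)) = (fact p ^ k * fact (p * (n - k)) :: nat)"
    using zero card_B by (simp add: count_pad_repeat not_in_iff mult.commute)
  moreover have "size ?A = p * n"
    using pad_repeat_in_vec_msets[OF assms] by (simp add: vec_msets_def)
  ultimately show ?thesis by (simp add: card_permutations_of_multiset(1))
qed

lemma pad_repeat_summand:
  assumes "k \<le> n" and B: "B \<in> vec_partitions N k"
  shows "card (permutations_of_multiset (pad_repeat p n k B)) * (\<Prod>v\<in>#pad_repeat p n k B. f v)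
         = fact (p * n) div (fact p ^ k * fact (p * (n - k))) * f zero_vec ^ (p * (n - k))
           * (\<Prod>b\<in>#B. hfun N f p b)"
proof -
  have "(\<Prod>b\<in>#B. hfun N f p b) = (\<Prod>b\<in>#B. f b ^ p)"
    using vec_partition_part_in_Uset[OF B]
    by (intro arg_cong[where f = prod_mset] image_mset_cong) (simp add: hfun_def)
  then show ?thesis
    using card_permutations_pad_repeat[OF assms]
    by (simp add: pad_repeat_def prod_mset_repeat_mset prod_mset_power mult_ac)
qed

theorem theorem12:
  fixes N p n :: nat and f :: "(nat \<Rightarrow> nat) \<Rightarrow> nat"
  assumes "N \<ge> 1" and "prime p" and "n \<ge> 1"
  shows "[fbinom N f (p * n) (const_vec N p) =
          (\<Sum>k = 1..n. \<Sum>B \<in> vec_partitions N k.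
             (fact (p * n) div ((fact p) ^ k * fact (p * (n - k))))
             * f zero_vec ^ (p * (n - k)) * (\<Prod>b\<in>#B. hfun N f p b))] (mod (p * n))"
proof -
  have "p > 0" using \<open>prime p\<close> by (simp add: prime_gt_0_nat)
  define S where "S = vec_msets N (p * n) (const_vec N p)"
  define P where "P A \<longleftrightarrow> (\<forall>v. p dvd count A v)" for A :: "(nat \<Rightarrow> nat) multiset"
  define g where "g A = card (permutations_of_multiset A) * (\<Prod>v\<in>#A. f v)" for A
  have dvd: "p * n dvd sum g {A \<in> S. \<not> P A}"
    unfolding g_def
    using dvd_card_permutations_if_not_all_counts_dvd[OF \<open>prime p\<close> \<open>N \<ge> 1\<close>]
    by (intro dvd_sum dvd_mult2) (auto simp: S_def P_def)
  have "fbinom N f (p * n) (const_vec N p) = sum g ({A \<in> S. P A} \<union> {A \<in> S. \<not> P A})"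
    unfolding fbinom_eq_sum_vec_msets g_def S_def by (rule arg_cong[where f = "sum _"]) blast
  also have "\<dots> = sum g {A \<in> S. P A} + sum g {A \<in> S. \<not> P A}"
    by (rule sum.union_disjoint) (auto simp: S_def intro: finite_subset[OF _ finite_vec_msets])
  also have "sum g {A \<in> S. P A}
      = (\<Sum>(k, B) \<in> (SIGMA k:{1..n}. vec_partitions N k). g (pad_repeat p n k B))"
    unfolding S_def P_def
    using sum.reindex_bij_betw[OF bij_betw_pad_repeat[OF \<open>p > 0\<close> \<open>N \<ge> 1\<close>], of g n]
    by (simp add: case_prod_beta')
  also have "\<dots> = (\<Sum>k = 1..n. \<Sum>B \<in> vec_partitions N k. g (pad_repeat p n k B))"
    by (rule sum.Sigma[symmetric])
      (auto intro: finite_subset[OF vec_partitions_subset_vec_msets finite_vec_msets])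
  also have "\<dots> = (\<Sum>k = 1..n. \<Sum>B \<in> vec_partitions N k.
             (fact (p * n) div ((fact p) ^ k * fact (p * (n - k))))
             * f zero_vec ^ (p * (n - k)) * (\<Prod>b\<in>#B. hfun N f p b))"
    unfolding g_def by (intro sum.cong refl pad_repeat_summand) auto
  finally show ?thesis using dvd by (simp add: cong_add_lcancel_0_nat cong_0_iff)
qed

end
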